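(* Let $\mathcal A_+,\mathcal A_-\subseteq\mathbb Z^n$ be disjoint finite sets with $\mathcal A_-\subseteq\operatorname{relint}(\operatorname{conv}(\mathcal A_+))$ such that $(\mathcal A_+,\mathcal A_-)$ is nonseparable. Then $\mathcal C_{\mathrm{SONC}}(\mathcal A_+,\mathcal A_-)=\mathcal C(\mathcal A_+,\mathcal A_-)$; that is, every copositive real Laurent polynomial with signed support $(\mathcal A_+,\mathcal A_-)$ is a sum of copositive circuit signomials.
   Context: A signomial with signed support $(\mathcal A_+,\mathcal A_-)$ is $f(x)=\sum_{a\in\mathcal A_+}c_ax^a-\sum_{b\in\mathcal A_-}c_bx^b$ on $\mathbb R^n_{>0}$ with all $c_a,c_b>0$; $\mathcal S(\mathcal A_+,\mathcal A_-)$ is the set of these. Copositive means nonnegative on $\mathbb R^n_{>0}$. Let $d=\dim\operatorname{conv}(\mathcal A_+\cup\mathcal A_-)$; $\mathcal F(\mathcal A_+)$ is the common refinement of all regular polyhedral subdivisions of $\mathcal A_+$, $\mathcal F_d(\mathcal A_+)$ its $d$-cells; $(\mathcal A_+,\mathcal A_-)$ is nonseparable if $\mathcal A_-\subseteq\operatorname{relint}\operatorname{conv}(\mathcal A_+)$ and some $D\in\mathcal F_d(\mathcal A_+)$ contains $\mathcal A_-$. A signed support $(\mathcal B_+,\mathcal B_-)$ is a circuit if either $\#(\mathcal B_+\cup\mathcal B_-)=\#\mathcal B_+=1$, or $\operatorname{conv}(\mathcal B_+\cup\mathcal B_-)$ is a simplex with vertex set $\mathcal B_+$, $\#\mathcal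 B_-=1$ and $\mathcal B_-\subseteq\operatorname{relint}\operatorname{conv}(\mathcal B_+)$; a circuit signomial has circuit signed support. A signomial is SONC if it is a finite sum of copositive circuit signomials. $\mathcal C_{\mathrm{SONC}}(\mathcal A_+,\mathcal A_-)$ and $\mathcal C(\mathcal A_+,\mathcal A_-)$ are the SONC, resp. copositive, elements of $\mathcal S(\mathcal A_+,\mathcal A_-)$. *)

theory Defs
  imports "HOL-Analysis.Analysis"
begin

definition pos_orthant :: "(real ^ 'n) set" where
  "pos_orthant = {x. \<forall>i. x $ i > 0}"

definition monom :: "real ^ 'n \<Rightarrow> real ^ 'n \<Rightarrow> real" where
  "monom a x = (\<Prod>i\<in>UNIV. (x $ i) powr (a $ i))"

definition signed_support :: "(real ^ 'n) set \<Rightarrow> (real ^ 'n) set \<Rightarrow> bool" where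
  "signed_support Ap Am \<longleftrightarrow> finite Ap \<and> finite Am \<and> Ap \<inter> Am = {}"

definition signomials :: "(real ^ 'n) set \<Rightarrow> (real ^ 'n) set \<Rightarrow> (real ^ 'n \<Rightarrow> real) set" where
  "signomials Ap Am = {f. \<exists>c. (\<forall>a\<in>Ap \<union> Am. c a > 0) \<and>
      f = (\<lambda>x. (\<Sum>a\<in>Ap. c a * monom a x) - (\<Sum>b\<in>Am. c b * monom b x))}"

definition copositive :: "(real ^ 'n \<Rightarrow> real) \<Rightarrow> bool" where
  "copositive f \<longleftrightarrow> (\<forall>x\<in>pos_orthant. f x \<ge> 0)"

definition circuit :: "(real ^ 'n) set \<Rightarrow> (real ^ 'n) set \<Rightarrow> bool" where
  "circuit Bp Bm \<longleftrightarrow> signed_support Bp Bm \<and>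
     ((card (Bp \<union> Bm) = 1 \<and> card Bp = 1) \<or>
      ((\<exists>k. k simplex (convex hull (Bp \<union> Bm))) \<and>
       {v. v extreme_point_of (convex hull (Bp \<union> Bm))} = Bp \<and>
       card Bm = 1 \<and> Bm \<subseteq> rel_interior (convex hull Bp)))"

definition circuit_signomial :: "(real ^ 'n \<Rightarrow> real) \<Rightarrow> bool" where
  "circuit_signomial g \<longleftrightarrow> (\<exists>Bp Bm. circuit Bp Bm \<and> g \<in> signomials Bp Bm)"

definition SONC :: "(real ^ 'n \<Rightarrow> real) \<Rightarrow> bool" where
  "SONC f \<longleftrightarrow> (\<exists>gs. (\<forall>g\<in>set gs. circuit_signomial g \<and> copositive g) \<and>
      (\<forall>x\<in>pos_orthant. f x = (\<Sum>g\<leftarrow>gs. g x)))"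

definition C_SONC :: "(real ^ 'n) set \<Rightarrow> (real ^ 'n) set \<Rightarrow> (real ^ 'n \<Rightarrow> real) set" where
  "C_SONC Ap Am = {f \<in> signomials Ap Am. SONC f}"

definition C_copos :: "(real ^ 'n) set \<Rightarrow> (real ^ 'n) set \<Rightarrow> (real ^ 'n \<Rightarrow> real) set" where
  "C_copos Ap Am = {f \<in> signomials Ap Am. copositive f}"

text \<open>Cells of the regular polyhedral subdivision of the point configuration A induced by
  the height function h: the convex hulls of the (nonempty) point sets of A lying on a
  lower face of the lifted configuration, i.e. the sets where an affine function lying
  weakly below h on A attains equality.\<close>
definition reg_cells :: "(real ^ 'n) set \<Rightarrow> (real ^ 'n \<Rightarrow> real) \<Rightarrow> (real ^ 'n) set set" where
  "reg_cells A h = {convex hull C | C. C \<noteq> {} \<and> C \<subseteq> A \<and>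
      (\<exists>w c. (\<forall>a\<in>A. w \<bullet> a + c \<le> h a) \<and> C = {a\<in>A. w \<bullet> a + c = h a})}"

text \<open>F(A): common refinement of all regular subdivisions of A; its cells are the
  nonempty intersections of one cell from each regular subdivision.\<close>
definition common_refinement :: "(real ^ 'n) set \<Rightarrow> (real ^ 'n) set set" where
  "common_refinement A = {P. P \<noteq> {} \<and>
      (\<exists>\<sigma>. (\<forall>h. \<sigma> h \<in> reg_cells A h) \<and> P = \<Inter> (range \<sigma>))}"

definition refinement_cells_dim :: "int \<Rightarrow> (real ^ 'n) set \<Rightarrow> (real ^ 'n) set set" where
  "refinement_cells_dim d A = {P \<in> common_refinement A. aff_dim P = d}"

definition nonseparable :: "(real ^ 'n) set \<Rightarrow> (real ^ 'n) set \<Rightarrow> bool" where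
  "nonseparable Ap Am \<longleftrightarrow> Am \<subseteq> rel_interior (convex hull Ap) \<and>
     (\<exists>D\<in>refinement_cells_dim (aff_dim (convex hull (Ap \<union> Am))) Ap. Am \<subseteq> D)"

end

theory Submission
  imports Defs "HOL-Library.Nat_Bijection"
begin

(* In logarithmic coordinates x = exp u the signomial becomes P u - N u, where P and N are
   positive exponential sums over A+ and A-. The ratio N/P is invariant under shifts of u
   orthogonal to aff A+, and since A- lies in the relative interior of conv A+ it decays
   exponentially along aff A+; hence it attains its maximum r <= 1 at some u0.
   There the nonnegative function r P - N vanishes together with its gradient, so the rescaled
   coefficients of r P and of N have the same mass and the same barycentre. By Farkas' lemma such
   coefficients admit a transport plan in which every inner exponent b is the barycentre of its
   column, unless some height function on A+ separates them; nonseparability rules this out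
   through the lower face containing A-. Each column yields an agiform with inner term b, which a
   Caratheodory argument splits into simplicial ones, copositive by the AM-GM inequality; the
   remainder (1 - r) P is a sum of monomials. *)

section \<open>Farkas' lemma by Fourier--Motzkin elimination\<close>

text \<open>Eliminating a variable whose coefficient column is \<open>a\<close>: rows with \<open>a r = 0\<close> are kept
  (at even indices), and every pair of a row with \<open>a p > 0\<close> and a row with \<open>a q < 0\<close> is
  combined (at odd indices) so that the coefficient cancels.\<close>

definition fm_pair_index :: "nat \<times> nat \<Rightarrow> nat" where
  "fm_pair_index pq = 2 * prod_encode pq + 1"

definition fm_combine :: "(nat \<Rightarrow> real) \<Rightarrow> (nat \<Rightarrow> real) \<Rightarrow> nat \<Rightarrow> real" where
  "fm_combine a L i = (if even i then L (i div 2)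
     else case prod_decode (i div 2) of (p, q) \<Rightarrow> - a q * L p + a p * L q)"

definition fm_rows :: "(nat \<Rightarrow> real) \<Rightarrow> nat set \<Rightarrow> nat set" where
  "fm_rows a R = (\<lambda>r. 2 * r) ` {r\<in>R. a r = 0} \<union> fm_pair_index ` ({r\<in>R. 0 < a r} \<times> {r\<in>R. a r < 0})"

lemma fm_combine_even [simp]: "fm_combine a L (2 * r) = L r"
  by (simp add: fm_combine_def)

lemma fm_combine_pair_index [simp]:
  "fm_combine a L (fm_pair_index (p, q)) = - a q * L p + a p * L q"
  by (simp add: fm_combine_def fm_pair_index_def)

lemma finite_fm_rows: "finite R \<Longrightarrow> finite (fm_rows a R)"
  by (simp add: fm_rows_def)

lemma fm_rows_keep: "r \<in> R \<Longrightarrow> a r = 0 \<Longrightarrow> 2 * r \<in> fm_rows a R"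
  by (simp add: fm_rows_def)

lemma fm_rows_pair:
  "p \<in> R \<Longrightarrow> 0 < a p \<Longrightarrow> q \<in> R \<Longrightarrow> a q < 0 \<Longrightarrow> fm_pair_index (p, q) \<in> fm_rows a R"
  by (simp add: fm_rows_def)

lemma fm_combine_eliminates: "i \<in> fm_rows a R \<Longrightarrow> fm_combine a a i = 0"
  by (auto simp: fm_rows_def)

lemma fm_combine_linear:
  "fm_combine a (\<lambda>r. \<Sum>v\<in>V. A r v * x v) i = (\<Sum>v\<in>V. fm_combine a (\<lambda>r. A r v) i * x v)"
  by (simp add: fm_combine_def sum_distrib_left sum.distrib sum_subtractf sum_negf algebra_simps
      split: prod.splits)

lemma fm_solution_extends:
  fixes s B :: "nat \<Rightarrow> real"
  assumes "finite R" and "\<forall>i\<in>fm_rows a R. fm_combine a s i \<le> fm_combine a B i"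
  shows "\<exists>t. \<forall>r\<in>R. a r * t + s r \<le> B r"
proof -
  define P where "P = {r\<in>R. 0 < a r}"
  define N where "N = {r\<in>R. a r < 0}"
  have fin: "finite P" "finite N"
    using assms(1) by (auto simp: P_def N_def)
  define upper where "upper r = (B r - s r) / a r" for r
  have zero_rows: "s r \<le> B r" if "r \<in> R" "a r = 0" for r
    using bspec[OF assms(2) fm_rows_keep[of r R a]] that by simp
  have bounds_compatible: "upper q \<le> upper p" if "p \<in> P" "q \<in> N" for p q
  proof -
    have "- a q * s p + a p * s q \<le> - a q * B p + a p * B q"
      using bspec[OF assms(2) fm_rows_pair[of p R a q]] that by (simp add: P_def N_def)
    then have "a p * (s q - B q) \<le> - a q * (B p - s p)"
      by (simp add: algebra_simps)
    then show ?thesis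
      using that by (simp add: P_def N_def upper_def field_simps)
  qed
  define t where "t = (if N = {} then (if P = {} then 0 else Min (upper ` P)) else Max (upper ` N))"
  have t_upper: "t \<le> upper p" if "p \<in> P" for p
  proof (cases "N = {}")
    case True
    then show ?thesis
      using that fin by (auto simp: t_def)
  next
    case False
    then show ?thesis
      using fin bounds_compatible[OF that] by (simp add: t_def Max_le_iff)
  qed
  have t_lower: "upper q \<le> t" if "q \<in> N" for q
    using that fin by (auto simp: t_def)
  have "a r * t + s r \<le> B r" if r: "r \<in> R" for r
  proof (cases "a r" "0 :: real" rule: linorder_cases)
    case less
    then show ?thesis
      using t_lower[of r] r less by (simp add: N_def upper_def neg_divide_le_eq algebra_simps)
  next
    case equal
    then show ?thesis
      using zero_rows r by simp
  next
    case greater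
    then show ?thesis
      using t_upper[of r] r greater by (simp add: P_def upper_def pos_le_divide_eq algebra_simps)
  qed
  then show ?thesis
    by blast
qed

lemma sum_fm_rows:
  fixes a y' G :: "nat \<Rightarrow> real"
  assumes "finite R"
  defines "P \<equiv> {r\<in>R. 0 < a r}" and "N \<equiv> {r\<in>R. a r < 0}"
  shows "(\<Sum>i\<in>fm_rows a R. y' i * fm_combine a G i) =
    (\<Sum>r\<in>{r\<in>R. a r = 0}. y' (2 * r) * G r)
    + (\<Sum>p\<in>P. (\<Sum>q\<in>N. y' (fm_pair_index (p, q)) * - a q) * G p)
    + (\<Sum>q\<in>N. (\<Sum>p\<in>P. y' (fm_pair_index (p, q)) * a p) * G q)"
proof -
  have fin: "finite P" "finite N"
    using assms(1) by (auto simp: P_def N_def)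
  have inj: "inj_on fm_pair_index (P \<times> N)"
    by (auto simp: inj_on_def fm_pair_index_def)
  have "(\<lambda>r. 2 * r) ` {r\<in>R. a r = 0} \<inter> fm_pair_index ` (P \<times> N) = {}"
    by (auto simp: fm_pair_index_def) presburger
  then have "(\<Sum>i\<in>fm_rows a R. y' i * fm_combine a G i) =
      (\<Sum>i\<in>(\<lambda>r. 2 * r) ` {r\<in>R. a r = 0}. y' i * fm_combine a G i)
      + (\<Sum>i\<in>fm_pair_index ` (P \<times> N). y' i * fm_combine a G i)"
    using assms(1) fin by (simp add: fm_rows_def P_def N_def sum.union_disjoint)
  also have "(\<Sum>i\<in>(\<lambda>r. 2 * r) ` {r\<in>R. a r = 0}. y' i * fm_combine a G i)
      = (\<Sum>r\<in>{r\<in>R. a r = 0}. y' (2 * r) * G r)"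
    by (subst sum.reindex) (auto simp: inj_on_def)
  also have "(\<Sum>i\<in>fm_pair_index ` (P \<times> N). y' i * fm_combine a G i)
      = (\<Sum>p\<in>P. \<Sum>q\<in>N. y' (fm_pair_index (p, q)) * - a q * G p)
        + (\<Sum>p\<in>P. \<Sum>q\<in>N. y' (fm_pair_index (p, q)) * a p * G q)"
    unfolding sum.reindex[OF inj] sum.cartesian_product sum.distrib[symmetric]
    by (intro sum.cong) (auto simp: algebra_simps)
  also have "(\<Sum>p\<in>P. \<Sum>q\<in>N. y' (fm_pair_index (p, q)) * a p * G q)
      = (\<Sum>q\<in>N. (\<Sum>p\<in>P. y' (fm_pair_index (p, q)) * a p) * G q)"
    by (subst sum.swap) (simp add: sum_distrib_right)
  finally show ?thesis
    by (simp add: sum_distrib_right add.assoc)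
qed

lemma fm_multipliers_pull_back:
  fixes y' :: "nat \<Rightarrow> real"
  assumes "finite R" and "\<forall>i\<in>fm_rows a R. 0 \<le> y' i"
  shows "\<exists>y. (\<forall>r\<in>R. 0 \<le> y r) \<and>
    (\<forall>G. (\<Sum>r\<in>R. y r * G r) = (\<Sum>i\<in>fm_rows a R. y' i * fm_combine a G i))"
proof -
  define Z where "Z = {r\<in>R. a r = 0}"
  define P where "P = {r\<in>R. 0 < a r}"
  define N where "N = {r\<in>R. a r < 0}"
  have fin: "finite Z" "finite P" "finite N"
    using assms(1) by (auto simp: Z_def P_def N_def)
  define y where "y r = (if r \<in> Z then y' (2 * r) else 0)
     + (if r \<in> P then \<Sum>q\<in>N. y' (fm_pair_index (r, q)) * - a q else 0)
     + (if r \<in> N then \<Sum>p\<in>P. y' (fm_pair_index (p, r)) * a p else 0)" for r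
  have y'_nonneg: "0 \<le> y' (2 * r)" if "r \<in> Z" for r
    using assms(2) that by (auto simp: fm_rows_def Z_def)
  have y'_pair_nonneg: "0 \<le> y' (fm_pair_index (p, q))" if "p \<in> P" "q \<in> N" for p q
    using assms(2) that by (auto simp: fm_rows_def P_def N_def)
  have "0 \<le> (\<Sum>q\<in>N. y' (fm_pair_index (p, q)) * - a q)" if "p \<in> P" for p
    using that y'_pair_nonneg by (intro sum_nonneg mult_nonneg_nonneg) (auto simp: N_def)
  moreover have "0 \<le> (\<Sum>p\<in>P. y' (fm_pair_index (p, q)) * a p)" if "q \<in> N" for q
    using that y'_pair_nonneg by (intro sum_nonneg mult_nonneg_nonneg) (auto simp: P_def)
  ultimately have "0 \<le> y r" for r
    unfolding y_def using y'_nonneg by (intro add_nonneg_nonneg) auto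
  moreover have "(\<Sum>r\<in>R. y r * G r) = (\<Sum>i\<in>fm_rows a R. y' i * fm_combine a G i)" for G
  proof -
    have R_split: "R = Z \<union> P \<union> N" and disj: "Z \<inter> P = {}" "(Z \<union> P) \<inter> N = {}"
      by (auto simp: Z_def P_def N_def)
    have "(\<Sum>r\<in>R. y r * G r) = (\<Sum>r\<in>Z. y r * G r) + (\<Sum>r\<in>P. y r * G r) + (\<Sum>r\<in>N. y r * G r)"
      unfolding R_split using fin disj by (simp add: sum.union_disjoint)
    also have "\<dots> = (\<Sum>r\<in>Z. y' (2 * r) * G r)
        + (\<Sum>p\<in>P. (\<Sum>q\<in>N. y' (fm_pair_index (p, q)) * - a q) * G p)
        + (\<Sum>q\<in>N. (\<Sum>p\<in>P. y' (fm_pair_index (p, q)) * a p) * G q)"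
      by (intro arg_cong2[where f = "(+)"] sum.cong) (auto simp: y_def Z_def P_def N_def)
    finally show ?thesis
      using sum_fm_rows[OF assms(1)] by (simp add: Z_def P_def N_def)
  qed
  ultimately show ?thesis
    by blast
qed

lemma fourier_motzkin_nat:
  fixes A :: "nat \<Rightarrow> 'v \<Rightarrow> real" and B :: "nat \<Rightarrow> real"
  assumes "finite V" and "finite R"
    and "\<not> (\<exists>x. \<forall>r\<in>R. (\<Sum>v\<in>V. A r v * x v) \<le> B r)"
  shows "\<exists>y. (\<forall>r\<in>R. 0 \<le> y r) \<and> (\<forall>v\<in>V. (\<Sum>r\<in>R. y r * A r v) = 0) \<and> (\<Sum>r\<in>R. y r * B r) < 0"
  using assms
proof (induction V arbitrary: R A B rule: finite_induct)
  case empty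
  then obtain r where r: "r \<in> R" "B r < 0"
    by (metis not_le sum.empty)
  then show ?case
    using empty.prems(1) by (intro exI[of _ "\<lambda>i. of_bool (i = r)"]) (simp add: Int_absorb1)
next
  case (insert k V)
  define a where "a r = A r k" for r
  define A' where "A' i v = fm_combine a (\<lambda>r. A r v) i" for i v
  have "\<not> (\<exists>x. \<forall>i\<in>fm_rows a R. (\<Sum>v\<in>V. A' i v * x v) \<le> fm_combine a B i)"
  proof
    assume "\<exists>x. \<forall>i\<in>fm_rows a R. (\<Sum>v\<in>V. A' i v * x v) \<le> fm_combine a B i"
    then obtain x where "\<forall>i\<in>fm_rows a R. fm_combine a (\<lambda>r. \<Sum>v\<in>V. A r v * x v) i \<le> fm_combine a B i"
      by (auto simp: A'_def fm_combine_linear)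
    then obtain t where t: "\<forall>r\<in>R. a r * t + (\<Sum>v\<in>V. A r v * x v) \<le> B r"
      using fm_solution_extends[OF insert.prems(1)] by blast
    have "(\<Sum>v\<in>insert k V. A r v * (x(k := t)) v) = a r * t + (\<Sum>v\<in>V. A r v * x v)" for r
      using insert.hyps by (simp add: a_def) (intro sum.cong; auto)
    then show False
      using insert.prems(2) t by metis
  qed
  from insert.IH[OF finite_fm_rows[OF insert.prems(1)] this] obtain y' where
    y': "\<forall>i\<in>fm_rows a R. 0 \<le> y' i" "\<forall>v\<in>V. (\<Sum>i\<in>fm_rows a R. y' i * A' i v) = 0"
      "(\<Sum>i\<in>fm_rows a R. y' i * fm_combine a B i) < 0"
    by blast
  obtain y where y: "\<forall>r\<in>R. 0 \<le> y r"
    and pull: "\<And>G. (\<Sum>r\<in>R. y r * G r) = (\<Sum>i\<in>fm_rows a R. y' i * fm_combine a G i)"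
    using fm_multipliers_pull_back[OF insert.prems(1) y'(1)] by blast
  have "(\<Sum>r\<in>R. y r * A r k) = 0"
    using pull[of a] by (simp add: a_def fm_combine_eliminates)
  then show ?case
    using y y'(2,3) pull by (intro exI[of _ y]) (auto simp: A'_def)
qed

lemma fourier_motzkin:
  fixes A :: "'r \<Rightarrow> 'v \<Rightarrow> real" and B :: "'r \<Rightarrow> real"
  assumes "finite V" and "finite R"
    and "\<not> (\<exists>x. \<forall>r\<in>R. (\<Sum>v\<in>V. A r v * x v) \<le> B r)"
  shows "\<exists>y. (\<forall>r\<in>R. 0 \<le> y r) \<and> (\<forall>v\<in>V. (\<Sum>r\<in>R. y r * A r v) = 0) \<and> (\<Sum>r\<in>R. y r * B r) < 0"
proof -
  obtain g :: "'r \<Rightarrow> nat" where g: "inj_on g R"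
    using finite_imp_inj_to_nat_seg[OF assms(2)] by blast
  define h where "h = the_inv_into R g"
  have hg: "h (g r) = r" if "r \<in> R" for r
    using that g by (simp add: h_def the_inv_into_f_f)
  have "\<not> (\<exists>x. \<forall>i\<in>g ` R. (\<Sum>v\<in>V. A (h i) v * x v) \<le> B (h i))"
    using assms(3) by (auto simp: hg)
  from fourier_motzkin_nat[OF assms(1) _ this] assms(2) obtain y where
    y: "\<forall>i\<in>g ` R. 0 \<le> y i" "\<forall>v\<in>V. (\<Sum>i\<in>g ` R. y i * A (h i) v) = 0"
      "(\<Sum>i\<in>g ` R. y i * B (h i)) < 0"
    by auto
  have reindex: "(\<Sum>i\<in>g ` R. y i * F (h i)) = (\<Sum>r\<in>R. y (g r) * F r)" for F :: "'r \<Rightarrow> real"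
    by (simp add: sum.reindex[OF g] hg)
  show ?thesis
    using y reindex[of B] reindex[of "\<lambda>r. A r v" for v]
    by (intro exI[of _ "y \<circ> g"]) auto
qed

lemma farkas_nonneg_equalities:
  fixes M :: "'e \<Rightarrow> 'v \<Rightarrow> real" and t :: "'e \<Rightarrow> real"
  assumes "finite V" and "finite E"
    and "\<not> (\<exists>x. (\<forall>v\<in>V. 0 \<le> x v) \<and> (\<forall>e\<in>E. (\<Sum>v\<in>V. M e v * x v) = t e))"
  shows "\<exists>z. (\<forall>v\<in>V. 0 \<le> (\<Sum>e\<in>E. z e * M e v)) \<and> (\<Sum>e\<in>E. z e * t e) < 0"
proof -
  define sign :: "bool \<Rightarrow> real" where "sign s = (if s then 1 else -1)" for s
  define R :: "('v + 'e \<times> bool) set" where "R = Inl ` V \<union> Inr ` (E \<times> UNIV)"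
  define A where "A r w = (case r of Inl v \<Rightarrow> - of_bool (w = v) | Inr (e, s) \<Rightarrow> sign s * M e w)"
    for r :: "'v + 'e \<times> bool" and w
  define B where "B r = (case r of Inl v \<Rightarrow> 0 | Inr (e, s) \<Rightarrow> sign s * t e)"
    for r :: "'v + 'e \<times> bool"
  have sum_R: "(\<Sum>r\<in>R. F r) = (\<Sum>v\<in>V. F (Inl v)) + (\<Sum>e\<in>E. F (Inr (e, True)) + F (Inr (e, False)))"
    for F :: "'v + 'e \<times> bool \<Rightarrow> real"
  proof -
    have "Inl ` V \<inter> Inr ` (E \<times> UNIV) = {}"
      by auto
    then have "(\<Sum>r\<in>R. F r) = (\<Sum>r\<in>Inl ` V. F r) + (\<Sum>r\<in>Inr ` (E \<times> UNIV). F r)"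
      unfolding R_def using assms(1,2) by (intro sum.union_disjoint) auto
    then show ?thesis
      by (simp add: sum.reindex sum.cartesian_product' UNIV_bool add.commute)
  qed
  have "\<not> (\<exists>x. \<forall>r\<in>R. (\<Sum>w\<in>V. A r w * x w) \<le> B r)"
  proof
    assume "\<exists>x. \<forall>r\<in>R. (\<Sum>w\<in>V. A r w * x w) \<le> B r"
    then obtain x where x: "\<And>r. r \<in> R \<Longrightarrow> (\<Sum>w\<in>V. A r w * x w) \<le> B r"
      by blast
    have "0 \<le> x v" if "v \<in> V" for v
      using x[of "Inl v"] that assms(1) by (simp add: R_def A_def B_def sum_negf Int_absorb1)
    moreover have "(\<Sum>v\<in>V. M e v * x v) = t e" if "e \<in> E" for e
      using x[of "Inr (e, True)"] x[of "Inr (e, False)"] that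
      by (simp add: R_def A_def B_def sign_def sum_negf)
    ultimately show False
      using assms(3) by blast
  qed
  from fourier_motzkin[OF assms(1) _ this] obtain y where
    y: "\<forall>r\<in>R. 0 \<le> y r" "\<forall>w\<in>V. (\<Sum>r\<in>R. y r * A r w) = 0" "(\<Sum>r\<in>R. y r * B r) < 0"
    using assms(1,2) by (auto simp: R_def)
  define z where "z e = y (Inr (e, True)) - y (Inr (e, False))" for e
  have "(\<Sum>e\<in>E. z e * M e w) = y (Inl w)" if "w \<in> V" for w
    using y(2) that assms(1)
    by (simp add: sum_R A_def z_def sign_def algebra_simps sum_subtractf sum_negf Int_absorb1)
  then have "\<forall>w\<in>V. 0 \<le> (\<Sum>e\<in>E. z e * M e w)"
    using y(1) by (simp add: R_def)
  moreover have "(\<Sum>e\<in>E. z e * t e) < 0"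
    using y(3) by (simp add: sum_R B_def z_def sign_def algebra_simps sum_subtractf)
  ultimately show ?thesis
    by blast
qed

section \<open>Signomials in logarithmic coordinates\<close>

definition expv :: "real ^ 'n \<Rightarrow> real ^ 'n" where
  "expv u = (\<chi> i. exp (u $ i))"

definition lnv :: "real ^ 'n \<Rightarrow> real ^ 'n" where
  "lnv x = (\<chi> i. ln (x $ i))"

definition exp_sum :: "(real ^ 'n \<Rightarrow> real) \<Rightarrow> (real ^ 'n) set \<Rightarrow> real ^ 'n \<Rightarrow> real" where
  "exp_sum c A u = (\<Sum>a\<in>A. c a * exp (a \<bullet> u))"

lemma expv_in_pos_orthant: "expv u \<in> pos_orthant"
  by (simp add: expv_def pos_orthant_def)

lemma expv_lnv: "x \<in> pos_orthant \<Longrightarrow> expv (lnv x) = x"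
  by (simp add: expv_def lnv_def pos_orthant_def vec_eq_iff)

lemma monom_expv: "monom a (expv u) = exp (a \<bullet> u)"
proof -
  have "monom a (expv u) = (\<Prod>i\<in>UNIV. exp (a $ i * u $ i))"
    by (simp add: monom_def expv_def powr_def)
  also have "\<dots> = exp (a \<bullet> u)"
    by (simp add: exp_sum inner_vec_def)
  finally show ?thesis .
qed

lemma monom_eq_exp_inner_lnv: "x \<in> pos_orthant \<Longrightarrow> monom a x = exp (a \<bullet> lnv x)"
  by (metis expv_lnv monom_expv)

lemma signomial_expv:
  "(\<Sum>a\<in>A. c a * monom a (expv u)) - (\<Sum>b\<in>B. c b * monom b (expv u)) = exp_sum c A u - exp_sum c B u"
  by (simp add: exp_sum_def monom_expv)

lemma exp_sum_pos: "finite A \<Longrightarrow> A \<noteq> {} \<Longrightarrow> \<forall>a\<in>A. 0 < c a \<Longrightarrow> 0 < exp_sum c A u"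
  unfolding exp_sum_def by (intro sum_pos) auto

lemma continuous_on_exp_sum: "continuous_on S (exp_sum c A)"
  unfolding exp_sum_def by (intro continuous_intros)

lemma SONC_zero: "SONC (\<lambda>x. 0)"
  unfolding SONC_def by (rule exI[of _ "[]"]) simp

lemma SONC_add:
  assumes "SONC f" and "SONC g"
  shows "SONC (\<lambda>x. f x + g x)"
proof -
  obtain fs gs where "\<forall>h\<in>set fs. circuit_signomial h \<and> copositive h" "\<forall>x\<in>pos_orthant. f x = (\<Sum>h\<leftarrow>fs. h x)"
    and "\<forall>h\<in>set gs. circuit_signomial h \<and> copositive h" "\<forall>x\<in>pos_orthant. g x = (\<Sum>h\<leftarrow>gs. h x)"
    using assms unfolding SONC_def by blast
  then show ?thesis
    unfolding SONC_def by (intro exI[of _ "fs @ gs"]) auto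
qed

lemma SONC_sum: "finite I \<Longrightarrow> (\<And>i. i \<in> I \<Longrightarrow> SONC (f i)) \<Longrightarrow> SONC (\<lambda>x. \<Sum>i\<in>I. f i x)"
  by (induction I rule: finite_induct) (simp_all add: SONC_zero SONC_add)

lemma SONC_circuit_signomial: "circuit_signomial g \<Longrightarrow> copositive g \<Longrightarrow> SONC g"
  unfolding SONC_def by (intro exI[of _ "[g]"]) simp

lemma SONC_imp_copositive:
  assumes "SONC f"
  shows "copositive f"
proof -
  obtain gs where gs: "\<forall>g\<in>set gs. circuit_signomial g \<and> copositive g"
    and f: "\<forall>x\<in>pos_orthant. f x = (\<Sum>g\<leftarrow>gs. g x)"
    using assms unfolding SONC_def by blast
  have "0 \<le> (\<Sum>g\<leftarrow>gs. g x)" if "x \<in> pos_orthant" for x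
    using gs that by (intro sum_list_nonneg) (auto simp: copositive_def)
  then show ?thesis
    using f by (simp add: copositive_def)
qed

lemma SONC_monomial:
  assumes "0 \<le> c"
  shows "SONC (\<lambda>x. c * monom a x)"
proof (cases "c = 0")
  case True
  then show ?thesis
    by (simp add: SONC_zero)
next
  case False
  with assms have "(\<lambda>x. c * monom a x) \<in> signomials {a} {}"
    unfolding signomials_def by (intro CollectI exI[of _ "\<lambda>_. c"]) auto
  moreover have "copositive (\<lambda>x. c * monom a x)"
    using assms by (simp add: copositive_def monom_eq_exp_inner_lnv)
  moreover have "circuit {a} {}"
    by (simp add: circuit_def signed_support_def)
  ultimately show ?thesis
    by (intro SONC_circuit_signomial) (auto simp: circuit_signomial_def)
qed

section \<open>Agiforms\<close>

text \<open>Reznick's agiforms, rescaled by the point \<open>expv z\<close>. When \<open>b\<close> is the \<open>\<mu>\<close>-barycentre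
  of \<open>S\<close>, the arithmetic-geometric mean inequality makes them nonnegative.\<close>

definition agiform ::
    "(real ^ 'n \<Rightarrow> real) \<Rightarrow> (real ^ 'n) set \<Rightarrow> real ^ 'n \<Rightarrow> real ^ 'n \<Rightarrow> real ^ 'n \<Rightarrow> real" where
  "agiform \<mu> S b z x = (\<Sum>a\<in>S. \<mu> a * exp (a \<bullet> z) * monom a x) - sum \<mu> S * exp (b \<bullet> z) * monom b x"

lemma agiform_add:
  "agiform (\<lambda>a. \<mu> a + \<nu> a) S b z x = agiform \<mu> S b z x + agiform \<nu> S b z x"
  by (simp add: agiform_def sum.distrib algebra_simps)

lemma agiform_mono_neutral:
  assumes "finite S" and "T \<subseteq> S" and "\<forall>a\<in>S - T. \<mu> a = 0"
  shows "agiform \<mu> S b z x = agiform \<mu> T b z x"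
  using assms by (simp add: agiform_def sum.mono_neutral_right[of S T])

lemma balanced_iff_barycentre:
  fixes \<mu> :: "'a::real_vector \<Rightarrow> real" and b :: 'a
  shows "(\<Sum>a\<in>S. \<mu> a *\<^sub>R (a - b)) = 0 \<longleftrightarrow> (\<Sum>a\<in>S. \<mu> a *\<^sub>R a) = sum \<mu> S *\<^sub>R b"
proof -
  have "(\<Sum>a\<in>S. \<mu> a *\<^sub>R (a - b)) = (\<Sum>a\<in>S. \<mu> a *\<^sub>R a) - sum \<mu> S *\<^sub>R b"
    by (simp add: scaleR_diff_right sum_subtractf scaleR_sum_left)
  then show ?thesis
    by simp
qed

lemma balanced_normalized_barycentre:
  fixes \<mu> :: "'a::real_vector \<Rightarrow> real" and b :: 'a
  assumes "(\<Sum>a\<in>S. \<mu> a *\<^sub>R (a - b)) = 0" and "sum \<mu> S \<noteq> 0"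
  shows "(\<Sum>a\<in>S. (\<mu> a / sum \<mu> S) *\<^sub>R a) = b"
proof -
  have "(\<Sum>a\<in>S. (\<mu> a / sum \<mu> S) *\<^sub>R a) = (1 / sum \<mu> S) *\<^sub>R (\<Sum>a\<in>S. \<mu> a *\<^sub>R a)"
    by (simp add: scaleR_sum_right divide_inverse_commute)
  then show ?thesis
    using assms by (simp add: balanced_iff_barycentre)
qed

lemma agiform_nonneg:
  fixes \<mu> :: "real ^ 'n \<Rightarrow> real"
  assumes "finite S" and "\<forall>a\<in>S. 0 \<le> \<mu> a" and "(\<Sum>a\<in>S. \<mu> a *\<^sub>R (a - b)) = 0"
    and "x \<in> pos_orthant"
  shows "0 \<le> agiform \<mu> S b z x"
proof (cases "sum \<mu> S = 0")
  case True
  then have "\<forall>a\<in>S. \<mu> a = 0"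
    using assms(1,2) sum_nonneg_eq_0_iff by blast
  then show ?thesis
    by (simp add: agiform_def)
next
  case False
  define M where "M = sum \<mu> S"
  have M: "0 < M"
    using False assms(2) sum_nonneg[of S \<mu>] by (simp add: M_def)
  then have "S \<noteq> {}"
    by (auto simp: M_def)
  define v where "v = z + lnv x"
  have rescaled: "exp (a \<bullet> z) * monom a x = exp (a \<bullet> v)" for a
    using assms(4) by (simp add: monom_eq_exp_inner_lnv v_def inner_add_right exp_add)
  have "b \<bullet> v = (\<Sum>a\<in>S. (\<mu> a / M) *\<^sub>R a) \<bullet> v"
    using balanced_normalized_barycentre[OF assms(3)] M by (simp add: M_def)
  then have "(\<Sum>a\<in>S. (\<mu> a / M) *\<^sub>R (a \<bullet> v)) = b \<bullet> v"
    by (simp add: inner_sum_left)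
  then have "exp (b \<bullet> v) \<le> (\<Sum>a\<in>S. (\<mu> a / M) * exp (a \<bullet> v))"
    using convex_on_sum[OF assms(1) \<open>S \<noteq> {}\<close> exp_convex, of "\<lambda>a. \<mu> a / M" "\<lambda>a. a \<bullet> v"] M assms(2)
    by (simp add: M_def sum_divide_distrib[symmetric])
  then have "M * exp (b \<bullet> v) \<le> (\<Sum>a\<in>S. \<mu> a * exp (a \<bullet> v))"
    using M by (simp add: sum_divide_distrib[symmetric] pos_le_divide_eq mult.commute)
  then show ?thesis
    by (simp add: agiform_def M_def mult.assoc rescaled)
qed

lemma SONC_agiform_simplex:
  fixes T :: "(real ^ 'n) set"
  assumes "finite T" and "T \<noteq> {}" and "b \<notin> T" and "\<not> affine_dependent T"
    and "\<forall>a\<in>T. 0 < \<mu> a" and "(\<Sum>a\<in>T. \<mu> a *\<^sub>R (a - b)) = 0"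
  shows "SONC (agiform \<mu> T b z)"
proof -
  define M where "M = sum \<mu> T"
  have M: "0 < M"
    unfolding M_def using assms(1,2,5) by (intro sum_pos) auto
  have "b \<in> rel_interior (convex hull T)"
    unfolding rel_interior_convex_hull_explicit[OF assms(4)]
  proof (intro CollectI exI conjI)
    show "\<forall>a\<in>T. 0 < \<mu> a / M" "(\<Sum>a\<in>T. \<mu> a / M) = 1"
      using assms(5) M by (auto simp: M_def sum_divide_distrib[symmetric])
    show "(\<Sum>a\<in>T. (\<mu> a / M) *\<^sub>R a) = b"
      using balanced_normalized_barycentre[OF assms(6)] M by (simp add: M_def)
  qed
  moreover have "convex hull (T \<union> {b}) = convex hull T"
    using hull_redundant[OF subsetD[OF rel_interior_subset calculation]] by simp
  ultimately have "circuit T {b}"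
    using assms(1,3,4) extreme_point_of_convex_hull_affine_independent[OF assms(4)]
    unfolding circuit_def signed_support_def simplex_def
    by (auto intro!: exI[of _ "int (card T) - 1"])
  moreover have "agiform \<mu> T b z \<in> signomials T {b}"
    unfolding signomials_def agiform_def
    using assms(3,5) M
    by (intro CollectI exI[of _ "\<lambda>a. if a = b then M * exp (b \<bullet> z) else \<mu> a * exp (a \<bullet> z)"])
      (auto simp: M_def intro!: sum.cong ext)
  moreover have "copositive (agiform \<mu> T b z)"
    using assms(1,5,6) by (simp add: copositive_def agiform_nonneg less_imp_le)
  ultimately show ?thesis
    by (intro SONC_circuit_signomial) (auto simp: circuit_signomial_def)
qed

lemma ratio_test:
  fixes \<mu> U :: "'a \<Rightarrow> real"
  assumes "finite T" and "\<forall>a\<in>T. 0 < \<mu> a" and "\<exists>a\<in>T. U a < 0"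
  shows "\<exists>s>0. (\<forall>a\<in>T. 0 \<le> \<mu> a + s * U a) \<and> (\<exists>a\<in>T. \<mu> a + s * U a = 0)"
proof -
  define Neg where "Neg = {a\<in>T. U a < 0}"
  have Neg: "finite Neg" "Neg \<noteq> {}"
    using assms(1,3) by (auto simp: Neg_def)
  define s where "s = Min ((\<lambda>a. \<mu> a / - U a) ` Neg)"
  have "s \<in> (\<lambda>a. \<mu> a / - U a) ` Neg"
    unfolding s_def using Neg by (intro Min_in) auto
  then obtain a0 where a0: "a0 \<in> Neg" "s = \<mu> a0 / - U a0"
    by blast
  have s_le: "s * - U a \<le> \<mu> a" if "a \<in> Neg" for a
  proof -
    have "s \<le> \<mu> a / - U a"
      unfolding s_def using Neg that by (intro Min_le) auto
    moreover have "0 < - U a"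
      using that by (simp add: Neg_def)
    ultimately show ?thesis
      by (simp only: pos_le_divide_eq)
  qed
  have "0 < s"
    using a0 assms(2) by (simp add: Neg_def divide_pos_neg)
  moreover have "0 \<le> \<mu> a + s * U a" if "a \<in> T" for a
  proof (cases "U a < 0")
    case True
    then show ?thesis
      using s_le[of a] that by (simp add: Neg_def)
  next
    case False
    then show ?thesis
      using assms(2) that \<open>0 < s\<close> by (simp add: add_nonneg_nonneg less_imp_le)
  qed
  moreover have "\<mu> a0 + s * U a0 = 0"
    using a0 by (simp add: Neg_def)
  ultimately show ?thesis
    using a0(1) by (auto simp: Neg_def)
qed

lemma balanced_weights_shift:
  fixes \<mu> U :: "'a::real_vector \<Rightarrow> real"
  assumes "finite S" and "\<forall>a\<in>S. 0 \<le> \<mu> a" and "\<forall>a\<in>S. \<mu> a = 0 \<longrightarrow> U a = 0"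
    and "sum U S = 0" and "(\<Sum>a\<in>S. U a *\<^sub>R a) = 0" and "\<exists>a\<in>S. U a < 0"
  shows "\<exists>s>0. (\<forall>a\<in>S. 0 \<le> \<mu> a + s * U a)
    \<and> (\<Sum>a\<in>S. (\<mu> a + s * U a) *\<^sub>R (a - b)) = (\<Sum>a\<in>S. \<mu> a *\<^sub>R (a - b))
    \<and> card {a\<in>S. 0 < \<mu> a + s * U a} < card {a\<in>S. 0 < \<mu> a}"
proof -
  define T where "T = {a\<in>S. 0 < \<mu> a}"
  have "\<exists>a\<in>T. U a < 0"
  proof -
    obtain a where "a \<in> S" "U a < 0"
      using assms(6) by blast
    then show ?thesis
      using assms(2,3) by (intro bexI[of _ a]) (auto simp: T_def order_less_le)
  qed
  then have T: "finite T" "\<forall>a\<in>T. 0 < \<mu> a" "\<exists>a\<in>T. U a < 0"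
    using assms(1) by (simp_all add: T_def)
  obtain s a0 where "0 < s" and nonneg: "\<forall>a\<in>T. 0 \<le> \<mu> a + s * U a"
    and a0: "a0 \<in> T" "\<mu> a0 + s * U a0 = 0"
    using ratio_test[OF T] by blast
  have outside: "\<mu> a = 0 \<and> U a = 0" if "a \<in> S" "a \<notin> T" for a
    using assms(2,3) that by (auto simp: T_def order_less_le)
  have "\<forall>a\<in>S. 0 \<le> \<mu> a + s * U a"
    using nonneg outside by fastforce
  moreover have "(\<Sum>a\<in>S. U a *\<^sub>R (a - b)) = 0"
    using assms(4,5) by (simp add: balanced_iff_barycentre)
  then have "(\<Sum>a\<in>S. (\<mu> a + s * U a) *\<^sub>R (a - b)) = (\<Sum>a\<in>S. \<mu> a *\<^sub>R (a - b))"
    by (simp add: scaleR_add_left sum.distrib flip: scaleR_scaleR scaleR_sum_right)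
  moreover have "card {a\<in>S. 0 < \<mu> a + s * U a} < card T"
  proof -
    have "{a\<in>S. 0 < \<mu> a + s * U a} \<subseteq> T - {a0}"
      using outside a0(2) by force
    then have "card {a\<in>S. 0 < \<mu> a + s * U a} \<le> card (T - {a0})"
      using T(1) by (intro card_mono) auto
    also have "\<dots> < card T"
      using T(1) a0(1) by (rule card_Diff1_less)
    finally show ?thesis .
  qed
  ultimately show ?thesis
    using \<open>0 < s\<close> by (auto simp: T_def)
qed

lemma sum_zero_exists_neg:
  fixes U :: "'a \<Rightarrow> real"
  assumes "finite S" and "sum U S = 0" and "\<exists>a\<in>S. U a \<noteq> 0"
  shows "\<exists>a\<in>S. U a < 0"
proof (rule ccontr)
  assume "\<not> ?thesis"
  then have "\<forall>a\<in>S. U a = 0"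
    using sum_nonneg_eq_0_iff[OF assms(1), of U] assms(2) by (simp add: not_less)
  then show False
    using assms(3) by blast
qed

lemma balanced_weights_split:
  fixes \<mu> :: "'a::real_vector \<Rightarrow> real"
  assumes "finite S" and "\<forall>a\<in>S. 0 \<le> \<mu> a" and "(\<Sum>a\<in>S. \<mu> a *\<^sub>R (a - b)) = 0"
    and "affine_dependent {a\<in>S. 0 < \<mu> a}"
  obtains \<nu>\<^sub>1 \<nu>\<^sub>2 where "\<And>a. \<mu> a = \<nu>\<^sub>1 a + \<nu>\<^sub>2 a"
    and "\<forall>a\<in>S. 0 \<le> \<nu>\<^sub>1 a" "(\<Sum>a\<in>S. \<nu>\<^sub>1 a *\<^sub>R (a - b)) = 0"
      "card {a\<in>S. 0 < \<nu>\<^sub>1 a} < card {a\<in>S. 0 < \<mu> a}"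
    and "\<forall>a\<in>S. 0 \<le> \<nu>\<^sub>2 a" "(\<Sum>a\<in>S. \<nu>\<^sub>2 a *\<^sub>R (a - b)) = 0"
      "card {a\<in>S. 0 < \<nu>\<^sub>2 a} < card {a\<in>S. 0 < \<mu> a}"
proof -
  define T where "T = {a\<in>S. 0 < \<mu> a}"
  have T: "finite T" "T \<subseteq> S"
    using assms(1) by (auto simp: T_def)
  obtain U where U: "sum U T = 0" "\<exists>v\<in>T. U v \<noteq> 0" "(\<Sum>v\<in>T. U v *\<^sub>R v) = 0"
    using assms(4) affine_dependent_explicit_finite[OF T(1)] by (auto simp: T_def)
  define U' where "U' a = (if a \<in> T then U a else 0)" for a
  have extend: "(\<Sum>a\<in>S. U' a *\<^sub>R F a) = (\<Sum>a\<in>T. U a *\<^sub>R F a)" for F :: "'a \<Rightarrow> 'b::real_vector"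
    using assms(1) T(2) by (intro sum.mono_neutral_cong_right) (auto simp: U'_def)
  have support: "\<forall>a\<in>S. \<mu> a = 0 \<longrightarrow> U' a = 0"
    by (simp add: U'_def T_def)
  have U'_sums: "sum U' S = 0" "(\<Sum>a\<in>S. U' a *\<^sub>R a) = 0"
    using extend[of "\<lambda>_. 1 :: real"] extend[of id] U(1,3) by simp_all
  have U'_nonzero: "\<exists>a\<in>S. U' a \<noteq> 0"
    using U(2) T(2) by (auto simp: U'_def)
  then have "\<exists>a\<in>S. U' a < 0"
    using sum_zero_exists_neg[OF assms(1) U'_sums(1)] by blast
  from balanced_weights_shift[OF assms(1,2) support U'_sums this, where b = b]
  obtain s\<^sub>1 where s\<^sub>1: "0 < s\<^sub>1" "\<forall>a\<in>S. 0 \<le> \<mu> a + s\<^sub>1 * U' a"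
    "(\<Sum>a\<in>S. (\<mu> a + s\<^sub>1 * U' a) *\<^sub>R (a - b)) = 0"
    "card {a\<in>S. 0 < \<mu> a + s\<^sub>1 * U' a} < card T"
    using assms(3) by (auto simp: T_def)
  have "\<exists>a\<in>S. - U' a < 0"
    using sum_zero_exists_neg[OF assms(1), of "\<lambda>a. - U' a"] U'_sums(1) U'_nonzero
    by (simp add: sum_negf)
  from balanced_weights_shift[of S \<mu> "\<lambda>a. - U' a", OF assms(1,2) _ _ _ this, where b = b]
  obtain s\<^sub>2 where s\<^sub>2: "0 < s\<^sub>2" "\<forall>a\<in>S. 0 \<le> \<mu> a + s\<^sub>2 * - U' a"
    "(\<Sum>a\<in>S. (\<mu> a + s\<^sub>2 * - U' a) *\<^sub>R (a - b)) = 0"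
    "card {a\<in>S. 0 < \<mu> a + s\<^sub>2 * - U' a} < card T"
    using assms(3) support U'_sums by (auto simp: T_def sum_negf)
  have scaled: "\<forall>a\<in>S. 0 \<le> c * w a" "(\<Sum>a\<in>S. (c * w a) *\<^sub>R (a - b)) = 0"
      "card {a\<in>S. 0 < c * w a} < card T"
    if "0 < c" "\<forall>a\<in>S. 0 \<le> w a" "(\<Sum>a\<in>S. w a *\<^sub>R (a - b)) = 0" "card {a\<in>S. 0 < w a} < card T"
    for c and w :: "'a \<Rightarrow> real"
    using that by (simp_all add: zero_less_mult_iff flip: scaleR_scaleR scaleR_sum_right)
  define c\<^sub>1 where "c\<^sub>1 = s\<^sub>2 / (s\<^sub>1 + s\<^sub>2)"
  define c\<^sub>2 where "c\<^sub>2 = s\<^sub>1 / (s\<^sub>1 + s\<^sub>2)"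
  have c: "0 < c\<^sub>1" "0 < c\<^sub>2" "c\<^sub>1 + c\<^sub>2 = 1" "c\<^sub>1 * s\<^sub>1 = c\<^sub>2 * s\<^sub>2"
    using s\<^sub>1(1) s\<^sub>2(1) by (simp_all add: c\<^sub>1_def c\<^sub>2_def add_divide_distrib[symmetric])
  have "\<mu> a = c\<^sub>1 * (\<mu> a + s\<^sub>1 * U' a) + c\<^sub>2 * (\<mu> a + s\<^sub>2 * - U' a)" for a
  proof -
    have "c\<^sub>1 * (\<mu> a + s\<^sub>1 * U' a) + c\<^sub>2 * (\<mu> a + s\<^sub>2 * - U' a)
        = (c\<^sub>1 + c\<^sub>2) * \<mu> a + (c\<^sub>1 * s\<^sub>1 - c\<^sub>2 * s\<^sub>2) * U' a"
      by (simp add: algebra_simps)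
    then show ?thesis
      using c(3,4) by simp
  qed
  then show ?thesis
    using scaled[OF c(1) s\<^sub>1(2-4)] scaled[OF c(2) s\<^sub>2(2-4)] unfolding T_def
    by (rule that)
qed

lemma SONC_agiform:
  fixes S :: "(real ^ 'n) set"
  assumes "finite S" and "b \<notin> S"
  shows "\<forall>a\<in>S. 0 \<le> \<mu> a \<Longrightarrow> (\<Sum>a\<in>S. \<mu> a *\<^sub>R (a - b)) = 0 \<Longrightarrow> SONC (agiform \<mu> S b z)"
proof (induction "card {a\<in>S. 0 < \<mu> a}" arbitrary: \<mu> rule: less_induct)
  case less
  define T where "T = {a\<in>S. 0 < \<mu> a}"
  have T: "finite T" "T \<subseteq> S" "\<forall>a\<in>S - T. \<mu> a = 0"
    using assms(1) less.prems(1) by (auto simp: T_def order_less_le)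
  have agiform_T: "agiform \<mu> S b z = agiform \<mu> T b z"
    using agiform_mono_neutral[OF assms(1) T(2,3)] by blast
  consider "T = {}" | "T \<noteq> {}" "\<not> affine_dependent T" | "affine_dependent T"
    by blast
  then show ?case
  proof cases
    case 1
    then have "agiform \<mu> S b z = (\<lambda>x. 0)"
      by (simp add: agiform_T agiform_def fun_eq_iff)
    then show ?thesis
      using SONC_zero by simp
  next
    case 2
    have "(\<Sum>a\<in>T. \<mu> a *\<^sub>R (a - b)) = 0"
      using less.prems(2) sum.mono_neutral_right[OF assms(1) T(2), of "\<lambda>a. \<mu> a *\<^sub>R (a - b)"] T(3)
      by simp
    then show ?thesis
      unfolding agiform_T using 2 T(1,2) assms(2)
      by (intro SONC_agiform_simplex) (auto simp: T_def)
  next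
    case 3
    then obtain \<nu>\<^sub>1 \<nu>\<^sub>2 where \<mu>: "\<And>a. \<mu> a = \<nu>\<^sub>1 a + \<nu>\<^sub>2 a"
      and \<nu>\<^sub>1: "\<forall>a\<in>S. 0 \<le> \<nu>\<^sub>1 a" "(\<Sum>a\<in>S. \<nu>\<^sub>1 a *\<^sub>R (a - b)) = 0" "card {a\<in>S. 0 < \<nu>\<^sub>1 a} < card T"
      and \<nu>\<^sub>2: "\<forall>a\<in>S. 0 \<le> \<nu>\<^sub>2 a" "(\<Sum>a\<in>S. \<nu>\<^sub>2 a *\<^sub>R (a - b)) = 0" "card {a\<in>S. 0 < \<nu>\<^sub>2 a} < card T"
      using balanced_weights_split[OF assms(1) less.prems] by (auto simp: T_def)
    have \<mu>_eq: "\<mu> = (\<lambda>a. \<nu>\<^sub>1 a + \<nu>\<^sub>2 a)"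
      using \<mu> by (simp add: fun_eq_iff)
    have "agiform \<mu> S b z = (\<lambda>x. agiform \<nu>\<^sub>1 S b z x + agiform \<nu>\<^sub>2 S b z x)"
      unfolding \<mu>_eq by (simp add: agiform_add fun_eq_iff)
    moreover have "SONC (agiform \<nu>\<^sub>1 S b z)" "SONC (agiform \<nu>\<^sub>2 S b z)"
      using less.hyps[OF \<nu>\<^sub>1(3)[unfolded T_def] \<nu>\<^sub>1(1,2)] less.hyps[OF \<nu>\<^sub>2(3)[unfolded T_def] \<nu>\<^sub>2(1,2)]
      by simp_all
    ultimately show ?thesis
      using SONC_add by metis
  qed
qed

section \<open>Transport plans between the outer and inner exponents\<close>

lemma sum_UNIV_option: "(\<Sum>j\<in>UNIV. f j) = f None + (\<Sum>i\<in>UNIV. f (Some i))"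
  for f :: "'a::finite option \<Rightarrow> 'b::comm_monoid_add"
  by (simp add: UNIV_option_conv sum.reindex)

type_synonym 'n transport_row = "real ^ 'n + (real ^ 'n) \<times> 'n option"

definition transport_rows :: "(real ^ 'n) set \<Rightarrow> (real ^ 'n) set \<Rightarrow> 'n transport_row set" where
  "transport_rows Ap Am = Inl ` Ap \<union> Inr ` (Am \<times> UNIV)"

text \<open>Transport plans are the nonnegative solutions of the following linear system: row
  \<open>Inl a\<close> prescribes the row sum at \<open>a\<close>, row \<open>Inr (b, None)\<close> the column sum at \<open>b\<close>, and row
  \<open>Inr (b, Some i)\<close> the \<open>i\<close>-th coordinate of the condition that \<open>b\<close> is the barycentre of its
  column.\<close>

definition transport_coeff :: "'n transport_row \<Rightarrow> (real ^ 'n) \<times> (real ^ 'n) \<Rightarrow> real" where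
  "transport_coeff e p = (case e of
      Inl a' \<Rightarrow> of_bool (fst p = a')
    | Inr (b', None) \<Rightarrow> of_bool (snd p = b')
    | Inr (b', Some i) \<Rightarrow> of_bool (snd p = b') * (fst p - snd p) $ i)"

definition transport_rhs :: "(real ^ 'n \<Rightarrow> real) \<Rightarrow> (real ^ 'n \<Rightarrow> real) \<Rightarrow> 'n transport_row \<Rightarrow> real" where
  "transport_rhs C D e = (case e of Inl a' \<Rightarrow> C a' | Inr (b', None) \<Rightarrow> D b' | Inr (b', Some i) \<Rightarrow> 0)"

lemma sum_transport_rows:
  fixes F :: "'n::finite transport_row \<Rightarrow> 'b::comm_monoid_add"
  assumes "finite Ap" and "finite Am"
  shows "(\<Sum>e\<in>transport_rows Ap Am. F e) = (\<Sum>a\<in>Ap. F (Inl a))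
    + (\<Sum>b\<in>Am. F (Inr (b, None)) + (\<Sum>i\<in>UNIV. F (Inr (b, Some i))))"
proof -
  have "Inl ` Ap \<inter> Inr ` (Am \<times> UNIV) = {}"
    by auto
  then have "(\<Sum>e\<in>transport_rows Ap Am. F e) = (\<Sum>e\<in>Inl ` Ap. F e) + (\<Sum>e\<in>Inr ` (Am \<times> UNIV). F e)"
    unfolding transport_rows_def using assms by (intro sum.union_disjoint) auto
  then show ?thesis
    by (simp add: sum.reindex sum.cartesian_product' sum_UNIV_option)
qed

lemma transport_system_solution:
  fixes x :: "(real ^ 'n::finite) \<times> (real ^ 'n) \<Rightarrow> real"
  assumes "finite Ap" and "finite Am"
    and x: "\<forall>e\<in>transport_rows Ap Am. (\<Sum>p\<in>Ap \<times> Am. transport_coeff e p * x p) = transport_rhs C D e"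
  shows "\<forall>a\<in>Ap. (\<Sum>b\<in>Am. x (a, b)) = C a"
    and "\<forall>b\<in>Am. (\<Sum>a\<in>Ap. x (a, b)) = D b \<and> (\<Sum>a\<in>Ap. x (a, b) *\<^sub>R (a - b)) = 0"
proof -
  note defs = transport_rows_def transport_coeff_def transport_rhs_def sum.cartesian_product'
  have "(\<Sum>b\<in>Am. x (a, b)) = C a" if "a \<in> Ap" for a
    using bspec[OF x, of "Inl a"] that assms(1) by (simp add: defs flip: sum_distrib_left)
  then show "\<forall>a\<in>Ap. (\<Sum>b\<in>Am. x (a, b)) = C a"
    by blast
  have "(\<Sum>a\<in>Ap. x (a, b)) = D b" if "b \<in> Am" for b
    using bspec[OF x, of "Inr (b, None)"] that assms(2) by (simp add: defs)
  moreover have "(\<Sum>a\<in>Ap. x (a, b) *\<^sub>R (a - b)) $ i = 0" if "b \<in> Am" for b i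
    using bspec[OF x, of "Inr (b, Some i)"] that assms(2)
    by (simp add: defs mult.assoc) (simp add: mult.commute)
  ultimately show "\<forall>b\<in>Am. (\<Sum>a\<in>Ap. x (a, b)) = D b \<and> (\<Sum>a\<in>Ap. x (a, b) *\<^sub>R (a - b)) = 0"
    by (simp add: vec_eq_iff)
qed

lemma transport_system_dual:
  fixes z :: "'n::finite transport_row \<Rightarrow> real"
  assumes "finite Ap" and "finite Am" and "a \<in> Ap" and "b \<in> Am"
  shows "(\<Sum>e\<in>transport_rows Ap Am. z e * transport_coeff e (a, b))
    = z (Inl a) + z (Inr (b, None)) + (\<chi> i. z (Inr (b, Some i))) \<bullet> (a - b)"
proof -
  have column: "z (Inr (b', None)) * transport_coeff (Inr (b', None)) (a, b)
      + (\<Sum>i\<in>UNIV. z (Inr (b', Some i)) * transport_coeff (Inr (b', Some i)) (a, b))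
      = of_bool (b = b') * (z (Inr (b', None)) + (\<chi> i. z (Inr (b', Some i))) \<bullet> (a - b))" for b'
    by (cases "b = b'") (simp_all add: transport_coeff_def inner_vec_def)
  show ?thesis
    using assms by (simp add: sum_transport_rows column) (simp add: transport_coeff_def)
qed

lemma transport_plan_dual:
  fixes Ap Am :: "(real ^ 'n) set" and C D :: "real ^ 'n \<Rightarrow> real"
  assumes "finite Ap" and "finite Am"
    and "\<nexists>\<pi>. (\<forall>a\<in>Ap. \<forall>b\<in>Am. 0 \<le> \<pi> (a, b)) \<and> (\<forall>a\<in>Ap. (\<Sum>b\<in>Am. \<pi> (a, b)) = C a)
      \<and> (\<forall>b\<in>Am. (\<Sum>a\<in>Ap. \<pi> (a, b)) = D b \<and> (\<Sum>a\<in>Ap. \<pi> (a, b) *\<^sub>R (a - b)) = 0)"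
  shows "\<exists>h g w. (\<forall>a\<in>Ap. \<forall>b\<in>Am. 0 \<le> h a + g b + w b \<bullet> (a - b))
    \<and> (\<Sum>a\<in>Ap. h a * C a) + (\<Sum>b\<in>Am. g b * D b) < 0"
proof -
  have "\<nexists>x. (\<forall>p\<in>Ap \<times> Am. 0 \<le> x p) \<and> (\<forall>e\<in>transport_rows Ap Am.
      (\<Sum>p\<in>Ap \<times> Am. transport_coeff e p * x p) = transport_rhs C D e)"
  proof
    assume "\<exists>x. (\<forall>p\<in>Ap \<times> Am. 0 \<le> x p) \<and> (\<forall>e\<in>transport_rows Ap Am.
      (\<Sum>p\<in>Ap \<times> Am. transport_coeff e p * x p) = transport_rhs C D e)"
    then obtain x where x: "\<forall>p\<in>Ap \<times> Am. 0 \<le> x p" and sys: "\<forall>e\<in>transport_rows Ap Am.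
      (\<Sum>p\<in>Ap \<times> Am. transport_coeff e p * x p) = transport_rhs C D e"
      by blast
    then have "(\<forall>a\<in>Ap. \<forall>b\<in>Am. 0 \<le> x (a, b)) \<and> (\<forall>a\<in>Ap. (\<Sum>b\<in>Am. x (a, b)) = C a)
      \<and> (\<forall>b\<in>Am. (\<Sum>a\<in>Ap. x (a, b)) = D b \<and> (\<Sum>a\<in>Ap. x (a, b) *\<^sub>R (a - b)) = 0)"
      using x transport_system_solution[OF assms(1,2) sys] by simp
    then show False
      using assms(3) by blast
  qed
  from farkas_nonneg_equalities[OF _ _ this] obtain z where
    z: "\<forall>p\<in>Ap \<times> Am. 0 \<le> (\<Sum>e\<in>transport_rows Ap Am. z e * transport_coeff e p)"
      "(\<Sum>e\<in>transport_rows Ap Am. z e * transport_rhs C D e) < 0"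
    using assms(1,2) by (auto simp: transport_rows_def)
  moreover have "(\<Sum>e\<in>transport_rows Ap Am. z e * transport_rhs C D e)
      = (\<Sum>a\<in>Ap. z (Inl a) * C a) + (\<Sum>b\<in>Am. z (Inr (b, None)) * D b)"
    using assms(1,2) by (simp add: sum_transport_rows transport_rhs_def)
  moreover have "0 \<le> z (Inl a) + z (Inr (b, None)) + (\<chi> i. z (Inr (b, Some i))) \<bullet> (a - b)"
    if "a \<in> Ap" "b \<in> Am" for a b
    using bspec[OF z(1), of "(a, b)"] transport_system_dual[OF assms(1,2) that] that by simp
  ultimately show ?thesis
    by (intro exI[of _ "\<lambda>a. z (Inl a)"] exI[of _ "\<lambda>b. z (Inr (b, None))"]
        exI[of _ "\<lambda>b. \<chi> i. z (Inr (b, Some i))"]) simp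
qed

lemma nonseparable_lower_face:
  assumes "nonseparable Ap Am"
  shows "\<exists>w c. (\<forall>a\<in>Ap. w \<bullet> a + c \<le> h a) \<and> Am \<subseteq> convex hull {a\<in>Ap. w \<bullet> a + c = h a}"
proof -
  obtain D where "D \<in> common_refinement Ap" "Am \<subseteq> D"
    using assms unfolding nonseparable_def refinement_cells_dim_def by blast
  then obtain \<sigma> where "\<sigma> h \<in> reg_cells Ap h" "Am \<subseteq> \<sigma> h"
    unfolding common_refinement_def by auto
  moreover obtain C w c where "\<sigma> h = convex hull C" "\<forall>a\<in>Ap. w \<bullet> a + c \<le> h a"
    "C = {a\<in>Ap. w \<bullet> a + c = h a}"
    using calculation(1) unfolding reg_cells_def by blast
  ultimately show ?thesis
    by blast
qed

lemma affine_le_on_convex_hull: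
  fixes K :: "'a::real_inner set"
  assumes "\<forall>a\<in>K. u \<bullet> a + s \<le> v \<bullet> a + c" and "x \<in> convex hull K"
  shows "u \<bullet> x + s \<le> v \<bullet> x + c"
proof -
  have "convex hull K \<subseteq> {x. (u - v) \<bullet> x \<le> c - s}"
    using assms(1) by (intro hull_minimal convex_halfspace_le) (auto simp: inner_diff_left)
  then show ?thesis
    using assms(2) by (auto simp: inner_diff_left)
qed

lemma transport_plan_exists:
  fixes Ap Am :: "(real ^ 'n) set" and C D :: "real ^ 'n \<Rightarrow> real"
  assumes "finite Ap" and "finite Am"
    and lower_face: "\<And>h. \<exists>v c. (\<forall>a\<in>Ap. v \<bullet> a + c \<le> h a) \<and> Am \<subseteq> convex hull {a\<in>Ap. v \<bullet> a + c = h a}"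
    and "\<forall>a\<in>Ap. 0 \<le> C a" and "\<forall>b\<in>Am. 0 \<le> D b"
    and "sum C Ap = sum D Am" and "(\<Sum>a\<in>Ap. C a *\<^sub>R a) = (\<Sum>b\<in>Am. D b *\<^sub>R b)"
  shows "\<exists>\<pi>. (\<forall>a\<in>Ap. \<forall>b\<in>Am. 0 \<le> \<pi> (a, b)) \<and> (\<forall>a\<in>Ap. (\<Sum>b\<in>Am. \<pi> (a, b)) = C a)
      \<and> (\<forall>b\<in>Am. (\<Sum>a\<in>Ap. \<pi> (a, b)) = D b \<and> (\<Sum>a\<in>Ap. \<pi> (a, b) *\<^sub>R (a - b)) = 0)"
proof (rule ccontr)
  assume "\<not> ?thesis"
  from transport_plan_dual[OF assms(1,2) this] obtain h g w where
    dual: "\<forall>a\<in>Ap. \<forall>b\<in>Am. 0 \<le> h a + g b + w b \<bullet> (a - b)"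
      "(\<Sum>a\<in>Ap. h a * C a) + (\<Sum>b\<in>Am. g b * D b) < 0"
    by blast
  obtain v c where face: "\<forall>a\<in>Ap. v \<bullet> a + c \<le> h a" "Am \<subseteq> convex hull {a\<in>Ap. v \<bullet> a + c = h a}"
    using lower_face by blast
  have g_bound: "- g b \<le> v \<bullet> b + c" if b: "b \<in> Am" for b
  proof -
    have "(- w b) \<bullet> a + (w b \<bullet> b - g b) \<le> v \<bullet> a + c" if "a \<in> Ap" "v \<bullet> a + c = h a" for a
      using bspec[OF bspec[OF dual(1) that(1)] b] that(2) by (simp add: inner_diff_right)
    then have "\<forall>a\<in>{a\<in>Ap. v \<bullet> a + c = h a}. (- w b) \<bullet> a + (w b \<bullet> b - g b) \<le> v \<bullet> a + c"
      by blast
    moreover have "b \<in> convex hull {a\<in>Ap. v \<bullet> a + c = h a}"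
      using face(2) b by blast
    ultimately have "(- w b) \<bullet> b + (w b \<bullet> b - g b) \<le> v \<bullet> b + c"
      by (rule affine_le_on_convex_hull)
    then show ?thesis
      by simp
  qed
  have "(\<Sum>b\<in>Am. D b * - g b) \<le> (\<Sum>b\<in>Am. D b * (v \<bullet> b + c))"
    using g_bound assms(5) by (intro sum_mono mult_left_mono) auto
  also have "\<dots> = v \<bullet> (\<Sum>b\<in>Am. D b *\<^sub>R b) + c * sum D Am"
    by (simp add: inner_sum_right sum.distrib sum_distrib_left algebra_simps)
  also have "\<dots> = v \<bullet> (\<Sum>a\<in>Ap. C a *\<^sub>R a) + c * sum C Ap"
    using assms(6,7) by simp
  also have "\<dots> = (\<Sum>a\<in>Ap. C a * (v \<bullet> a + c))"
    by (simp add: inner_sum_right sum.distrib sum_distrib_left algebra_simps)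
  also have "\<dots> \<le> (\<Sum>a\<in>Ap. C a * h a)"
    using face(1) assms(4) by (intro sum_mono mult_left_mono) auto
  finally show False
    using dual(2) by (simp add: sum_negf mult.commute)
qed

section \<open>The ratio of the negative to the positive part attains its maximum\<close>

lemma convex_hull_le_inner:
  fixes A :: "'a::real_inner set"
  assumes "y \<in> convex hull A"
  shows "\<exists>a\<in>A. y \<bullet> p \<le> a \<bullet> p"
proof (rule ccontr)
  assume "\<not> ?thesis"
  then have "convex hull A \<subseteq> {x. p \<bullet> x < p \<bullet> y}"
    by (intro hull_minimal convex_halfspace_lt) (auto simp: inner_commute not_le)
  then show False
    using assms by auto
qed

lemma rel_interior_convex_hull_margin:
  fixes b :: "'a::euclidean_space"
  assumes "b \<in> rel_interior (convex hull A)"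
  shows "\<exists>\<delta>>0. \<forall>p. b + p \<in> affine hull A \<longrightarrow> (\<exists>a\<in>A. b \<bullet> p + \<delta> * norm p \<le> a \<bullet> p)"
proof -
  obtain e where "0 < e" and e: "ball b e \<inter> affine hull A \<subseteq> convex hull A"
    using assms by (auto simp: mem_rel_interior_ball)
  have b: "b \<in> convex hull A"
    using assms rel_interior_subset by blast
  have "\<exists>a\<in>A. b \<bullet> p + e / 2 * norm p \<le> a \<bullet> p" if p: "b + p \<in> affine hull A" for p
  proof (cases "p = 0")
    case True
    then show ?thesis
      using convex_hull_le_inner[OF b, of 0] by auto
  next
    case False
    define t where "t = e / 2 / norm p"
    have "(1 - t) *\<^sub>R b + t *\<^sub>R (b + p) \<in> affine hull A"
      using b p by (intro mem_affine affine_affine_hull) (auto intro: hull_subset[THEN subsetD]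
          convex_hull_subset_affine_hull[THEN subsetD])
    moreover have "(1 - t) *\<^sub>R b + t *\<^sub>R (b + p) = b + t *\<^sub>R p"
      by (simp add: algebra_simps)
    moreover have "dist b (b + t *\<^sub>R p) < e"
      using False \<open>0 < e\<close> by (simp add: t_def dist_norm)
    ultimately have "b + t *\<^sub>R p \<in> convex hull A"
      using e by auto
    then obtain a where "a \<in> A" "(b + t *\<^sub>R p) \<bullet> p \<le> a \<bullet> p"
      using convex_hull_le_inner by blast
    moreover have "(b + t *\<^sub>R p) \<bullet> p = b \<bullet> p + e / 2 * norm p"
      using False by (simp add: t_def inner_add_left power2_norm_eq_inner[symmetric] power2_eq_square)
    ultimately show ?thesis
      by auto
  qed
  then show ?thesis
    using \<open>0 < e\<close> by (intro exI[of _ "e / 2"]) auto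
qed

lemma exp_sum_orthogonal_shift:
  fixes G :: "(real ^ 'n) set"
  assumes "\<forall>a\<in>A. a - a0 \<in> span G" and "\<forall>w\<in>span G. orthogonal q w"
  shows "exp_sum c A (p + q) = exp (a0 \<bullet> q) * exp_sum c A p"
proof -
  have "a \<bullet> q = a0 \<bullet> q" if "a \<in> A" for a
  proof -
    have "a - a0 \<in> span G"
      using assms(1) that by blast
    then have "q \<bullet> (a - a0) = 0"
      using assms(2) by (simp add: orthogonal_def)
    then show ?thesis
      by (simp add: inner_diff_right inner_commute)
  qed
  then show ?thesis
    by (simp add: exp_sum_def inner_add_right exp_add sum_distrib_left mult_ac)
qed

lemma exp_sum_le_of_margin:
  fixes Ap Am :: "(real ^ 'n) set"
  assumes "finite Ap" and "finite Am" and "Ap \<noteq> {}" and "\<forall>a\<in>Ap \<union> Am. 0 < c a"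
    and "\<forall>b\<in>Am. \<exists>a\<in>Ap. b \<bullet> p + \<delta> * norm p \<le> a \<bullet> p"
  shows "exp_sum c Am p \<le> sum c Am / Min (c ` Ap) * exp (- \<delta> * norm p) * exp_sum c Ap p"
proof -
  define m where "m = Min (c ` Ap)"
  have m: "0 < m" "\<forall>a\<in>Ap. m \<le> c a"
    using assms(1,3,4) by (auto simp: m_def)
  have "exp (b \<bullet> p) \<le> exp (- \<delta> * norm p) * (exp_sum c Ap p / m)" if b: "b \<in> Am" for b
  proof -
    obtain a where a: "a \<in> Ap" "b \<bullet> p + \<delta> * norm p \<le> a \<bullet> p"
      using assms(5) b by blast
    have "m * exp (a \<bullet> p) \<le> c a * exp (a \<bullet> p)"
      using m a(1) by simp
    also have "\<dots> \<le> exp_sum c Ap p"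
      unfolding exp_sum_def using assms(1,4) a(1)
      by (intro member_le_sum[of a Ap "\<lambda>a. c a * exp (a \<bullet> p)"]) (auto intro: less_imp_le)
    finally have "exp (a \<bullet> p) \<le> exp_sum c Ap p / m"
      using m by (simp add: pos_le_divide_eq mult.commute)
    moreover have "exp (b \<bullet> p) \<le> exp (- \<delta> * norm p) * exp (a \<bullet> p)"
      using a(2) by (simp flip: exp_add)
    ultimately show ?thesis
      by (meson exp_ge_zero mult_left_mono order_trans)
  qed
  then have "exp_sum c Am p \<le> (\<Sum>b\<in>Am. c b * (exp (- \<delta> * norm p) * (exp_sum c Ap p / m)))"
    unfolding exp_sum_def using assms(4) by (intro sum_mono mult_left_mono) (auto intro: less_imp_le)
  also have "\<dots> = sum c Am * (exp (- \<delta> * norm p) * (exp_sum c Ap p / m))"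
    by (rule sum_distrib_right[symmetric])
  finally show ?thesis
    by (simp add: m_def divide_inverse mult_ac)
qed

lemma rel_interior_convex_hull_uniform_margin:
  fixes B :: "'a::euclidean_space set"
  assumes "finite B" and "B \<subseteq> rel_interior (convex hull A)"
  shows "\<exists>\<delta>>0. \<forall>b\<in>B. \<forall>p. b + p \<in> affine hull A \<longrightarrow> (\<exists>a\<in>A. b \<bullet> p + \<delta> * norm p \<le> a \<bullet> p)"
  using assms
proof (induction B rule: finite_induct)
  case empty
  then show ?case
    using zero_less_one by blast
next
  case (insert b B)
  obtain \<delta>\<^sub>1 where "0 < \<delta>\<^sub>1"
    and \<delta>\<^sub>1: "\<forall>p. b + p \<in> affine hull A \<longrightarrow> (\<exists>a\<in>A. b \<bullet> p + \<delta>\<^sub>1 * norm p \<le> a \<bullet> p)"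
    using rel_interior_convex_hull_margin insert.prems by blast
  obtain \<delta>\<^sub>2 where "0 < \<delta>\<^sub>2"
    and \<delta>\<^sub>2: "\<forall>b\<in>B. \<forall>p. b + p \<in> affine hull A \<longrightarrow> (\<exists>a\<in>A. b \<bullet> p + \<delta>\<^sub>2 * norm p \<le> a \<bullet> p)"
    using insert.IH insert.prems by blast
  have weaken: "b' \<bullet> p + min \<delta>\<^sub>1 \<delta>\<^sub>2 * norm p \<le> a \<bullet> p"
    if "b' \<bullet> p + \<delta> * norm p \<le> a \<bullet> p" "min \<delta>\<^sub>1 \<delta>\<^sub>2 \<le> \<delta>" for b' p a \<delta>
    using that mult_right_mono[OF that(2) norm_ge_zero[of p]] by linarith
  have "\<exists>a\<in>A. b' \<bullet> p + min \<delta>\<^sub>1 \<delta>\<^sub>2 * norm p \<le> a \<bullet> p"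
    if b': "b' \<in> insert b B" and p: "b' + p \<in> affine hull A" for b' p
  proof (cases "b' = b")
    case True
    then obtain a where "a \<in> A" "b' \<bullet> p + \<delta>\<^sub>1 * norm p \<le> a \<bullet> p"
      using \<delta>\<^sub>1 p by blast
    then show ?thesis
      using weaken[of b' p \<delta>\<^sub>1] by auto
  next
    case False
    then obtain a where "a \<in> A" "b' \<bullet> p + \<delta>\<^sub>2 * norm p \<le> a \<bullet> p"
      using \<delta>\<^sub>2 b' p by blast
    then show ?thesis
      using weaken[of b' p \<delta>\<^sub>2] by auto
  qed
  then show ?case
    using \<open>0 < \<delta>\<^sub>1\<close> \<open>0 < \<delta>\<^sub>2\<close> by (intro exI[of _ "min \<delta>\<^sub>1 \<delta>\<^sub>2"]) auto
qed

lemma affine_hull_diff_in_span: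
  assumes "a0 \<in> A" and "x \<in> affine hull A"
  shows "x - a0 \<in> span ((\<lambda>x. - a0 + x) ` (A - {a0}))"
  using affine_hull_span2[OF assms(1)] assms(2) by auto

lemma exp_sum_ratio_decay:
  fixes Ap Am :: "(real ^ 'n) set"
  assumes "finite Ap" and "finite Am" and "Am \<subseteq> rel_interior (convex hull Ap)"
    and "\<forall>a\<in>Ap \<union> Am. 0 < c a" and "a0 \<in> Ap"
  shows "\<exists>\<delta>>0. \<exists>K. \<forall>p\<in>span ((\<lambda>x. - a0 + x) ` (Ap - {a0})).
    exp_sum c Am p / exp_sum c Ap p \<le> K * exp (- \<delta> * norm p)"
proof -
  define L where "L = span ((\<lambda>x. - a0 + x) ` (Ap - {a0}))"
  have aff: "affine hull Ap = (\<lambda>x. a0 + x) ` L"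
    unfolding L_def by (rule affine_hull_span2[OF assms(5)])
  obtain \<delta> where "0 < \<delta>"
    and margin: "\<forall>b\<in>Am. \<forall>p. b + p \<in> affine hull Ap \<longrightarrow> (\<exists>a\<in>Ap. b \<bullet> p + \<delta> * norm p \<le> a \<bullet> p)"
    using rel_interior_convex_hull_uniform_margin[OF assms(2,3)] by blast
  have "b + p \<in> affine hull Ap" if "b \<in> Am" "p \<in> L" for b p
  proof -
    have "b \<in> affine hull Ap"
      using that(1) assms(3) rel_interior_subset convex_hull_subset_affine_hull by blast
    then have "(b - a0) + p \<in> L"
      using affine_hull_diff_in_span[OF assms(5)] that(2) by (simp add: L_def span_add)
    moreover have "b + p = a0 + ((b - a0) + p)"
      by simp
    ultimately show ?thesis
      unfolding aff by blast
  qed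
  then have "exp_sum c Am p \<le> sum c Am / Min (c ` Ap) * exp (- \<delta> * norm p) * exp_sum c Ap p"
    if "p \<in> L" for p
    using assms(1,2,4,5) margin that by (intro exp_sum_le_of_margin) blast+
  moreover have "0 < exp_sum c Ap p" for p
    using assms(1,4,5) by (intro exp_sum_pos) auto
  ultimately show ?thesis
    using \<open>0 < \<delta>\<close> unfolding L_def
    by (intro exI[of _ \<delta>] conjI exI[of _ "sum c Am / Min (c ` Ap)"]) (auto simp: pos_divide_le_eq mult_ac)
qed

lemma continuous_attains_sup_of_exp_decay:
  fixes f :: "'a::euclidean_space \<Rightarrow> real"
  assumes "closed L" and "0 \<in> L" and "continuous_on L f" and "0 < f 0"
    and "0 < \<delta>" and decay: "\<forall>p\<in>L. f p \<le> K * exp (- \<delta> * norm p)"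
  shows "\<exists>u0\<in>L. \<forall>p\<in>L. f p \<le> f u0"
proof -
  have "f 0 \<le> K"
    using decay assms(2) by force
  define R where "R = ln (K / f 0) / \<delta>"
  have "0 \<le> R"
    using \<open>f 0 \<le> K\<close> assms(4,5) by (simp add: R_def)
  have far: "f p < f 0" if "p \<in> L" "R < norm p" for p
  proof -
    have "ln (K / f 0) < \<delta> * norm p"
      using that(2) assms(5) by (simp add: R_def pos_divide_less_eq mult.commute)
    then have "K / f 0 < exp (\<delta> * norm p)"
      using \<open>f 0 \<le> K\<close> assms(4) ln_less_cancel_iff[of "K / f 0" "exp (\<delta> * norm p)"] by simp
    then have "K * exp (- \<delta> * norm p) < f 0"
      using assms(4) by (simp add: exp_minus divide_less_eq field_simps)
    then show ?thesis
      using decay that(1) by fastforce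
  qed
  have "compact (cball 0 R \<inter> L)"
    using assms(1) by (rule compact_Int_closed[OF compact_cball])
  moreover have "0 \<in> cball 0 R \<inter> L"
    using \<open>0 \<le> R\<close> assms(2) by simp
  moreover have "continuous_on (cball 0 R \<inter> L) f"
    using assms(3) by (rule continuous_on_subset) blast
  ultimately obtain u0 where u0: "u0 \<in> cball 0 R \<inter> L" "\<forall>p\<in>cball 0 R \<inter> L. f p \<le> f u0"
    using continuous_attains_sup by (metis empty_iff)
  have "f p \<le> f u0" if "p \<in> L" for p
  proof (cases "norm p \<le> R")
    case True
    then show ?thesis
      using u0(2) that by simp
  next
    case False
    then have "f p < f 0"
      using far that by simp
    also have "f 0 \<le> f u0"
      using u0(2) \<open>0 \<in> cball 0 R \<inter> L\<close> by blast
    finally show ?thesis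
      by simp
  qed
  then show ?thesis
    using u0(1) by blast
qed

lemma exp_sum_ratio_projection:
  fixes Ap Am :: "(real ^ 'n) set"
  assumes "a0 \<in> Ap" and "Am \<subseteq> affine hull Ap"
  shows "\<exists>p\<in>span ((\<lambda>x. - a0 + x) ` (Ap - {a0})).
    exp_sum c Am u / exp_sum c Ap u = exp_sum c Am p / exp_sum c Ap p"
proof -
  define G where "G = (\<lambda>x. - a0 + x) ` (Ap - {a0})"
  obtain p q where "p \<in> span G" "\<And>w. w \<in> span G \<Longrightarrow> orthogonal q w" "u = p + q"
    using orthogonal_subspace_decomp_exists[of G u] by blast
  moreover have "\<forall>a\<in>A. a - a0 \<in> span G" if "A = Ap \<or> A = Am" for A
    using that assms affine_hull_diff_in_span[OF assms(1)] hull_subset[of Ap] unfolding G_def by blast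
  ultimately have "exp_sum c A u = exp (a0 \<bullet> q) * exp_sum c A p" if "A = Ap \<or> A = Am" for A
    using exp_sum_orthogonal_shift[where A = A and G = G] that by blast
  then show ?thesis
    using \<open>p \<in> span G\<close> unfolding G_def by (intro bexI[of _ p]) auto
qed

lemma exp_sum_ratio_attains_max:
  fixes Ap Am :: "(real ^ 'n) set"
  assumes "finite Ap" and "finite Am" and "Am \<noteq> {}" and "Am \<subseteq> rel_interior (convex hull Ap)"
    and "\<forall>a\<in>Ap \<union> Am. 0 < c a"
  shows "\<exists>u0. \<forall>u. exp_sum c Am u / exp_sum c Ap u \<le> exp_sum c Am u0 / exp_sum c Ap u0"
proof -
  define ratio where "ratio u = exp_sum c Am u / exp_sum c Ap u" for u
  have "Ap \<noteq> {}"
    using assms(3,4) by auto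
  then obtain a0 where a0: "a0 \<in> Ap"
    by blast
  define L where "L = span ((\<lambda>x. - a0 + x) ` (Ap - {a0}))"
  obtain \<delta> K where "0 < \<delta>" and decay: "\<forall>p\<in>L. ratio p \<le> K * exp (- \<delta> * norm p)"
    using exp_sum_ratio_decay[OF assms(1,2,4,5) a0] unfolding ratio_def L_def by blast
  have P_pos: "0 < exp_sum c Ap u" for u
    using assms(1,5) a0 by (intro exp_sum_pos) auto
  have "0 < ratio 0"
    using assms(2,3,5) unfolding ratio_def by (intro divide_pos_pos[OF exp_sum_pos P_pos]) auto
  moreover have "continuous_on L ratio"
    unfolding ratio_def using P_pos
    by (intro continuous_on_divide continuous_on_exp_sum) (simp add: order_less_imp_not_eq2)
  ultimately obtain u0 where "\<forall>p\<in>L. ratio p \<le> ratio u0"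
    using continuous_attains_sup_of_exp_decay[OF _ _ _ _ \<open>0 < \<delta>\<close> decay]
    by (metis L_def closed_span span_zero)
  moreover have "Am \<subseteq> affine hull Ap"
    using assms(4) rel_interior_subset convex_hull_subset_affine_hull by blast
  ultimately show ?thesis
    using exp_sum_ratio_projection[OF a0] unfolding ratio_def L_def by metis
qed

section \<open>Decomposition of a copositive signomial\<close>

lemma exp_sum_diff_min_barycentre:
  fixes Ap Am :: "(real ^ 'n) set"
  assumes "\<And>v. exp_sum D Am v \<le> exp_sum C Ap v" and "exp_sum C Ap 0 = exp_sum D Am 0"
  shows "(\<Sum>a\<in>Ap. C a *\<^sub>R a) = (\<Sum>b\<in>Am. D b *\<^sub>R b)"
proof -
  have "(\<Sum>a\<in>Ap. C a * a $ i) = (\<Sum>b\<in>Am. D b * b $ i)" for i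
  proof -
    define \<phi> where "\<phi> t = exp_sum C Ap (t *\<^sub>R axis i 1) - exp_sum D Am (t *\<^sub>R axis i 1)" for t
    have deriv: "DERIV \<phi> 0 :> (\<Sum>a\<in>Ap. C a * a $ i) - (\<Sum>b\<in>Am. D b * b $ i)"
      unfolding \<phi>_def exp_sum_def
      by (auto intro!: derivative_eq_intros simp: inner_axis mult.commute)
    have "\<forall>t. \<bar>0 - t\<bar> < 1 \<longrightarrow> \<phi> 0 \<le> \<phi> t"
      using assms by (simp add: \<phi>_def)
    then have "(\<Sum>a\<in>Ap. C a * a $ i) - (\<Sum>b\<in>Am. D b * b $ i) = 0"
      by (rule DERIV_local_min[OF deriv zero_less_one])
    then show ?thesis
      by simp
  qed
  then show ?thesis
    by (simp add: vec_eq_iff mult.commute)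
qed

lemma copositive_touching_scaling:
  fixes Ap Am :: "(real ^ 'n) set"
  assumes "finite Ap" and "finite Am" and "Am \<noteq> {}" and "Am \<subseteq> rel_interior (convex hull Ap)"
    and "\<forall>a\<in>Ap \<union> Am. 0 < c a" and "\<And>u. exp_sum c Am u \<le> exp_sum c Ap u"
  obtains r u0 where "0 < r" and "r \<le> 1"
    and "(\<Sum>a\<in>Ap. r * c a * exp (a \<bullet> u0)) = (\<Sum>b\<in>Am. c b * exp (b \<bullet> u0))"
    and "(\<Sum>a\<in>Ap. (r * c a * exp (a \<bullet> u0)) *\<^sub>R a) = (\<Sum>b\<in>Am. (c b * exp (b \<bullet> u0)) *\<^sub>R b)"
proof -
  obtain u0 where u0: "\<And>u. exp_sum c Am u / exp_sum c Ap u \<le> exp_sum c Am u0 / exp_sum c Ap u0"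
    using exp_sum_ratio_attains_max[OF assms(1-5)] by blast
  have "Ap \<noteq> {}"
    using assms(3,4) by auto
  then have P_pos: "0 < exp_sum c Ap u" for u
    using assms(1,5) by (intro exp_sum_pos) auto
  define r where "r = exp_sum c Am u0 / exp_sum c Ap u0"
  have "0 < r"
    unfolding r_def using assms(2,3,5) by (intro divide_pos_pos[OF exp_sum_pos P_pos]) auto
  moreover have "r \<le> 1"
    using assms(6)[of u0] P_pos[of u0] by (simp add: r_def)
  moreover have touch: "exp_sum c Am (u0 + v) \<le> r * exp_sum c Ap (u0 + v)" for v
    using u0[of "u0 + v"] P_pos[of "u0 + v"] by (simp add: r_def pos_divide_le_eq)
  define C where "C a = r * c a * exp (a \<bullet> u0)" for a
  define D where "D b = c b * exp (b \<bullet> u0)" for b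
  have shift: "exp_sum C Ap v = r * exp_sum c Ap (u0 + v)" "exp_sum D Am v = exp_sum c Am (u0 + v)" for v
    by (simp_all add: C_def D_def exp_sum_def sum_distrib_left inner_add_right exp_add mult_ac)
  have "exp_sum C Ap 0 = exp_sum D Am 0"
    using P_pos[of u0] by (simp add: shift r_def)
  moreover have "(\<Sum>a\<in>Ap. C a *\<^sub>R a) = (\<Sum>b\<in>Am. D b *\<^sub>R b)"
    using touch calculation by (intro exp_sum_diff_min_barycentre) (simp_all add: shift)
  ultimately show ?thesis
    using that[of r u0] by (simp add: C_def D_def exp_sum_def)
qed

lemma sum_agiform_transport_plan:
  assumes "\<forall>a\<in>Ap. (\<Sum>b\<in>Am. \<pi> (a, b)) = C a" and "\<forall>b\<in>Am. (\<Sum>a\<in>Ap. \<pi> (a, b)) = D b"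
  shows "(\<Sum>b\<in>Am. agiform (\<lambda>a. \<pi> (a, b)) Ap b z x)
    = (\<Sum>a\<in>Ap. C a * exp (a \<bullet> z) * monom a x) - (\<Sum>b\<in>Am. D b * exp (b \<bullet> z) * monom b x)"
proof -
  have "(\<Sum>b\<in>Am. \<Sum>a\<in>Ap. \<pi> (a, b) * exp (a \<bullet> z) * monom a x)
      = (\<Sum>a\<in>Ap. C a * exp (a \<bullet> z) * monom a x)"
    using assms(1) by (subst sum.swap) (simp flip: sum_distrib_right)
  moreover have "(\<Sum>b\<in>Am. (\<Sum>a\<in>Ap. \<pi> (a, b)) * exp (b \<bullet> z) * monom b x)
      = (\<Sum>b\<in>Am. D b * exp (b \<bullet> z) * monom b x)"
    using assms(2) by simp
  ultimately show ?thesis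
    by (simp add: agiform_def sum_subtractf)
qed

lemma SONC_copositive_signomial:
  fixes Ap Am :: "(real ^ 'n) set"
  assumes "finite Ap" and "finite Am" and "Ap \<inter> Am = {}" and "Am \<subseteq> rel_interior (convex hull Ap)"
    and lower_face: "\<And>h. \<exists>v c. (\<forall>a\<in>Ap. v \<bullet> a + c \<le> h a) \<and> Am \<subseteq> convex hull {a\<in>Ap. v \<bullet> a + c = h a}"
    and "\<forall>a\<in>Ap \<union> Am. 0 < c a"
    and "copositive (\<lambda>x. (\<Sum>a\<in>Ap. c a * monom a x) - (\<Sum>b\<in>Am. c b * monom b x))"
  shows "SONC (\<lambda>x. (\<Sum>a\<in>Ap. c a * monom a x) - (\<Sum>b\<in>Am. c b * monom b x))"
proof (cases "Am = {}")
  case True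
  have "SONC (\<lambda>x. \<Sum>a\<in>Ap. c a * monom a x)"
    using assms(1,6) by (intro SONC_sum SONC_monomial) (auto intro: less_imp_le)
  then show ?thesis
    using True by simp
next
  case False
  have "exp_sum c Am u \<le> exp_sum c Ap u" for u
    using bspec[OF assms(7)[unfolded copositive_def] expv_in_pos_orthant[of u]]
    by (simp add: signomial_expv)
  then obtain r u0 where r: "0 < r" "r \<le> 1"
    and mass: "(\<Sum>a\<in>Ap. r * c a * exp (a \<bullet> u0)) = (\<Sum>b\<in>Am. c b * exp (b \<bullet> u0))"
    and bary: "(\<Sum>a\<in>Ap. (r * c a * exp (a \<bullet> u0)) *\<^sub>R a) = (\<Sum>b\<in>Am. (c b * exp (b \<bullet> u0)) *\<^sub>R b)"
    using copositive_touching_scaling[OF assms(1,2) False assms(4,6)] by blast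
  have "\<forall>a\<in>Ap. 0 \<le> r * c a * exp (a \<bullet> u0)" "\<forall>b\<in>Am. 0 \<le> c b * exp (b \<bullet> u0)"
    using assms(6) r(1) by (auto simp: less_imp_le)
  then obtain \<pi> where \<pi>: "\<forall>a\<in>Ap. \<forall>b\<in>Am. 0 \<le> \<pi> (a, b)"
    and rows: "\<forall>a\<in>Ap. (\<Sum>b\<in>Am. \<pi> (a, b)) = r * c a * exp (a \<bullet> u0)"
    and cols: "\<forall>b\<in>Am. (\<Sum>a\<in>Ap. \<pi> (a, b)) = c b * exp (b \<bullet> u0) \<and> (\<Sum>a\<in>Ap. \<pi> (a, b) *\<^sub>R (a - b)) = 0"
    using transport_plan_exists[OF assms(1,2) lower_face _ _ mass bary] by blast
  have "SONC (\<lambda>x. \<Sum>b\<in>Am. agiform (\<lambda>a. \<pi> (a, b)) Ap b (- u0) x)"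
    using assms(1-3) \<pi> cols by (intro SONC_sum SONC_agiform) auto
  moreover have "SONC (\<lambda>x. \<Sum>a\<in>Ap. (1 - r) * c a * monom a x)"
    using assms(1,6) r(2) by (intro SONC_sum SONC_monomial) (auto intro!: mult_nonneg_nonneg simp: less_imp_le)
  ultimately have "SONC (\<lambda>x. (\<Sum>b\<in>Am. agiform (\<lambda>a. \<pi> (a, b)) Ap b (- u0) x)
      + (\<Sum>a\<in>Ap. (1 - r) * c a * monom a x))"
    by (rule SONC_add)
  moreover have "(\<Sum>b\<in>Am. agiform (\<lambda>a. \<pi> (a, b)) Ap b (- u0) x)
      = (\<Sum>a\<in>Ap. r * c a * monom a x) - (\<Sum>b\<in>Am. c b * monom b x)" for x
    using sum_agiform_transport_plan[OF rows, of "\<lambda>b. c b * exp (b \<bullet> u0)"] cols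
    by (simp add: mult.assoc flip: exp_add)
  ultimately show ?thesis
    by (simp add: algebra_simps sum.distrib[symmetric])
qed

theorem theorem3p15:
  fixes Ap Am :: "(real ^ 'n) set"
  assumes "\<forall>a\<in>Ap \<union> Am. \<forall>i. a $ i \<in> \<int>"
    and "finite Ap" and "finite Am" and "Ap \<inter> Am = {}"
    and "Am \<subseteq> rel_interior (convex hull Ap)"
    and "nonseparable Ap Am"
  shows "C_SONC Ap Am = C_copos Ap Am"
proof
  show "C_SONC Ap Am \<subseteq> C_copos Ap Am"
    unfolding C_SONC_def C_copos_def using SONC_imp_copositive by auto
  show "C_copos Ap Am \<subseteq> C_SONC Ap Am"
  proof
    fix f
    assume "f \<in> C_copos Ap Am"
    then obtain c where "\<forall>a\<in>Ap \<union> Am. 0 < c a" "copositive f"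
      and f: "f = (\<lambda>x. (\<Sum>a\<in>Ap. c a * monom a x) - (\<Sum>b\<in>Am. c b * monom b x))"
      unfolding C_copos_def signomials_def by blast
    then have "SONC f"
      using SONC_copositive_signomial[OF assms(2-5) nonseparable_lower_face[OF assms(6)]] by blast
    then show "f \<in> C_SONC Ap Am"
      using \<open>f \<in> C_copos Ap Am\<close> by (simp add: C_SONC_def C_copos_def)
  qed
qed

end
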